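(* Let $n,m\in\mathbb{N}$, $t_{\mathrm{end}}>0$, and consider coefficient functions $E,J,R\in C(\mathbb{R}^n,\mathbb{R}^{n,n})$, $z\in C(\mathbb{R}^n,\mathbb{R}^n)$, $B\in C(\mathbb{R}^n,\mathbb{R}^{n,m})$ and a Hamiltonian $\mathcal{H}\in C^1(\mathbb{R}^n,\mathbb{R})$ such that for all $x\in\mathbb{R}^n$: $J(x)=-J(x)^\top$, $R(x)=R(x)^\top$ is positive semidefinite, and $E(x)^\top z(x)=\nabla\mathcal{H}(x)$ (these are the coefficients of the port-Hamiltonian system $E(x)\dot x=(J(x)-R(x))z(x)+B(x)u$, $y=B(x)^\top z(x)$ on $[0,t_{\mathrm{end}}]$). Let $0=t_1<t_2<\dots<t_q=t_{\mathrm{end}}$, and let $(\overline{E},\overline{z})$ be a discrete gradient pair for $(\mathcal{H},E,z)$. Let $\overline{J},\overline{R}\colon\mathbb{R}^n\times\mathbb{R}^n\to\mathbb{R}^{n,n}$ and $\overline{B}\colon\mathbb{R}^n\times\mathbb{R}^n\to\mathbb{R}^{n,m}$ be continuous with $\overline{J}(x,x)=J(x)$, $\overline{R}(x,x)=R(x)$, $\overline{B}(x,x)=B(x)$ for all $x\in\mathbb{R}^n$, with $\overline{J}$ pointwise skew-symmetric and $\overline{R}$ pointwise symmetric positive semidefinite. Let $\breve u^{3/2},\breve u^{5/2},\dots,\breve u^{q-1/2}\in\mathbb{R}^m$ be such that there exists a sequence $(\breve x^1,\dots,\breve x^q)$ in $\mathbb{R}^n$ satisfying, for $k=1,\dots,q-1$,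 $$\overline{E}(\breve x^k,\breve x^{k+1})\breve x^{k+1}=\overline{E}(\breve x^k,\breve x^{k+1})\breve x^{k}+(t_{k+1}-t_k)\overline{B}(\breve x^k,\breve x^{k+1})\breve u^{k+1/2}+(t_{k+1}-t_k)\big(\overline{J}(\breve x^k,\breve x^{k+1})-\overline{R}(\breve x^k,\breve x^{k+1})\big)\overline{z}(\breve x^k,\breve x^{k+1}).$$ Define $\breve y^{k+1/2}:=\overline{B}(\breve x^k,\breve x^{k+1})^\top\overline{z}(\breve x^k,\breve x^{k+1})$. Then every such sequence satisfies, for $k=1,\dots,q-1$, $$\frac{\mathcal{H}(\breve x^{k+1})-\mathcal{H}(\breve x^k)}{t_{k+1}-t_k}=-\overline{z}(\breve x^k,\breve x^{k+1})^\top\overline{R}(\breve x^k,\breve x^{k+1})\overline{z}(\breve x^k,\breve x^{k+1})+\big(\breve y^{k+1/2}\big)^\top\breve u^{k+1/2}\le\big(\breve y^{k+1/2}\big)^\top\breve u^{k+1/2}.$$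
   Context: Let $\mathcal{H}\in C^1(\mathbb{R}^n,\mathbb{R})$, $E\in C(\mathbb{R}^n,\mathbb{R}^{n,n})$ and $z\in C(\mathbb{R}^n,\mathbb{R}^n)$ satisfy $\nabla\mathcal{H}(x)=E(x)^\top z(x)$ for all $x\in\mathbb{R}^n$. A pair $(\overline{E},\overline{z})\in C(\mathbb{R}^n\times\mathbb{R}^n,\mathbb{R}^{n,n})\times C(\mathbb{R}^n\times\mathbb{R}^n,\mathbb{R}^n)$ (i.e. both maps continuous) is called a discrete gradient pair for $(\mathcal{H},E,z)$ if (i) $\overline{E}(x,x)=E(x)$ for all $x\in\mathbb{R}^n$; (ii) $\overline{z}(x,x)=z(x)$ for all $x\in\mathbb{R}^n$; (iii) $\overline{z}(x,\hat x)^\top\overline{E}(x,\hat x)(\hat x-x)=\mathcal{H}(\hat x)-\mathcal{H}(x)$ for all $(x,\hat x)\in\mathbb{R}^n\times\mathbb{R}^n$. *)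

theory Defs
  imports "HOL-Analysis.Analysis"
begin

definition discrete_gradient_pair ::
  "(real^'n \<Rightarrow> real) \<Rightarrow> (real^'n \<Rightarrow> real^'n^'n) \<Rightarrow> (real^'n \<Rightarrow> real^'n)
   \<Rightarrow> (real^'n \<Rightarrow> real^'n \<Rightarrow> real^'n^'n) \<Rightarrow> (real^'n \<Rightarrow> real^'n \<Rightarrow> real^'n) \<Rightarrow> bool" where
  "discrete_gradient_pair H E z Eb zb \<longleftrightarrow>
     continuous_on UNIV (\<lambda>p. Eb (fst p) (snd p)) \<and>
     continuous_on UNIV (\<lambda>p. zb (fst p) (snd p)) \<and>
     (\<forall>x. Eb x x = E x) \<and> (\<forall>x. zb x x = z x) \<and>
     (\<forall>x xh. zb x xh \<bullet> (Eb x xh *v (xh - x)) = H xh - H x)"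

definition psd :: "real^'n^'n \<Rightarrow> bool" where
  "psd A \<longleftrightarrow> (\<forall>v. 0 \<le> v \<bullet> (A *v v))"

end

theory Submission
  imports Defs
begin

text \<open>Pairing the scheme with the discrete gradient zb(x, xh) turns its left-hand side into the
energy increment H(xh) - H(x). On the right-hand side the skew-symmetric part Jb contributes
nothing, Rb contributes the nonpositive dissipation, and Bb contributes the supplied power
y \<bullet> u with y = Bb^T zb.\<close>

lemma inner_matrix_vector_transpose:
  fixes A :: "real^'n^'m"
  shows "x \<bullet> (A *v y) = (transpose A *v x) \<bullet> y"
  by (simp add: dot_lmul_matrix)

lemma matrix_vector_mult_uminus_left:
  fixes A :: "'a::ring_1^'n^'m"
  shows "(- A) *v v = - (A *v v)"
  by (simp add: matrix_vector_mult_def vec_eq_iff sum_negf)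

lemma skew_symmetric_quadratic_form_eq_0:
  fixes A :: "real^'n^'n"
  assumes "transpose A = - A"
  shows "v \<bullet> (A *v v) = 0"
proof -
  have "v \<bullet> (A *v v) = (transpose A *v v) \<bullet> v"
    by (rule inner_matrix_vector_transpose)
  also have "\<dots> = - (v \<bullet> (A *v v))"
    using assms by (simp add: matrix_vector_mult_uminus_left inner_commute)
  finally show ?thesis
    by simp
qed

lemma discrete_power_balance:
  fixes A J R :: "real^'n^'n" and B :: "real^'m^'n"
  assumes energy: "w \<bullet> (A *v (xh - x)) = dH"
    and step: "A *v xh = A *v x + h *\<^sub>R (B *v u) + h *\<^sub>R ((J - R) *v w)"
    and skew: "transpose J = - J"
  shows "dH = h * (- (w \<bullet> (R *v w)) + (transpose B *v w) \<bullet> u)"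
proof -
  have "A *v (xh - x) = h *\<^sub>R (B *v u) + h *\<^sub>R ((J - R) *v w)"
    using step by (simp add: matrix_vector_mult_diff_distrib)
  then have "dH = h * (w \<bullet> (B *v u)) + h * (w \<bullet> (J *v w)) - h * (w \<bullet> (R *v w))"
    using energy by (simp add: inner_add_right inner_diff_right matrix_vector_mult_diff_rdistrib
        right_diff_distrib)
  then show ?thesis
    using skew_symmetric_quadratic_form_eq_0 [OF skew, of w]
    by (simp add: inner_matrix_vector_transpose [of w B] algebra_simps)
qed

theorem theorem2:
  fixes E J R :: "real^'n \<Rightarrow> real^'n^'n"
    and z :: "real^'n \<Rightarrow> real^'n"
    and B :: "real^'n \<Rightarrow> real^'m^'n"
    and H :: "real^'n \<Rightarrow> real"
    and tend :: real and q :: nat and t :: "nat \<Rightarrow> real"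
    and Eb Jb Rb :: "real^'n \<Rightarrow> real^'n \<Rightarrow> real^'n^'n"
    and zb :: "real^'n \<Rightarrow> real^'n \<Rightarrow> real^'n"
    and Bb :: "real^'n \<Rightarrow> real^'n \<Rightarrow> real^'m^'n"
    and u :: "nat \<Rightarrow> real^'m"
    and x :: "nat \<Rightarrow> real^'n"
  assumes tend_pos: "tend > 0"
    and contE: "continuous_on UNIV E" and contJ: "continuous_on UNIV J"
    and contR: "continuous_on UNIV R" and contz: "continuous_on UNIV z"
    and contB: "continuous_on UNIV B"
    and H_C1: "\<exists>g. continuous_on UNIV g \<and> (\<forall>x. GDERIV H x :> g x)"
    and J_skew: "\<forall>x. transpose (J x) = - J x"
    and R_sym: "\<forall>x. transpose (R x) = R x"
    and R_psd: "\<forall>x. psd (R x)"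
    and grad: "\<forall>x. GDERIV H x :> (transpose (E x) *v z x)"
    and t1: "t 1 = 0" and tq: "t q = tend"
    and t_mono: "\<forall>k\<in>{1..<q}. t k < t (Suc k)"
    and dg: "discrete_gradient_pair H E z Eb zb"
    and contJb: "continuous_on UNIV (\<lambda>p. Jb (fst p) (snd p))"
    and contRb: "continuous_on UNIV (\<lambda>p. Rb (fst p) (snd p))"
    and contBb: "continuous_on UNIV (\<lambda>p. Bb (fst p) (snd p))"
    and Jb_diag: "\<forall>y. Jb y y = J y" and Rb_diag: "\<forall>y. Rb y y = R y"
    and Bb_diag: "\<forall>y. Bb y y = B y"
    and Jb_skew: "\<forall>y yh. transpose (Jb y yh) = - Jb y yh"
    and Rb_sym: "\<forall>y yh. transpose (Rb y yh) = Rb y yh"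
    and Rb_psd: "\<forall>y yh. psd (Rb y yh)"
    and scheme: "\<forall>k\<in>{1..<q}.
       Eb (x k) (x (Suc k)) *v x (Suc k) =
         Eb (x k) (x (Suc k)) *v x k
         + (t (Suc k) - t k) *\<^sub>R (Bb (x k) (x (Suc k)) *v u k)
         + (t (Suc k) - t k) *\<^sub>R ((Jb (x k) (x (Suc k)) - Rb (x k) (x (Suc k)))
                                      *v zb (x k) (x (Suc k)))"
  shows "\<forall>k\<in>{1..<q}.
     (let y = transpose (Bb (x k) (x (Suc k))) *v zb (x k) (x (Suc k)) in
       (H (x (Suc k)) - H (x k)) / (t (Suc k) - t k)
         = - (zb (x k) (x (Suc k)) \<bullet> (Rb (x k) (x (Suc k)) *v zb (x k) (x (Suc k)))) + y \<bullet> u k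
       \<and> - (zb (x k) (x (Suc k)) \<bullet> (Rb (x k) (x (Suc k)) *v zb (x k) (x (Suc k)))) + y \<bullet> u k
           \<le> y \<bullet> u k)"
proof -
  have balance: "H (x (Suc k)) - H (x k) = (t (Suc k) - t k) *
      (- (zb (x k) (x (Suc k)) \<bullet> (Rb (x k) (x (Suc k)) *v zb (x k) (x (Suc k))))
       + (transpose (Bb (x k) (x (Suc k))) *v zb (x k) (x (Suc k))) \<bullet> u k)"
    if "k \<in> {1..<q}" for k
    using dg scheme that Jb_skew
    by (intro discrete_power_balance) (auto simp: discrete_gradient_pair_def)
  have dissipation: "0 \<le> zb y yh \<bullet> (Rb y yh *v zb y yh)" for y yh
    using Rb_psd by (simp add: psd_def)
  show ?thesis
    using balance dissipation t_mono by (simp add: Let_def less_imp_neq [symmetric])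
qed

end
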